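(* Let $A$ and $B$ be nonempty closed subsets of a complete metric space $(X,\rho)$ such that the ordered pair $(A,B)$ has the $BUC$ property. Let $T:A\cup B\to A\cup B$ be a cyclic map and suppose there exists $k\in(0,1)$ such that $$\rho(Tx,Ty)\le k\max\{\rho(x,y),\rho(x,Tx),\rho(y,Ty)\}+(1-k)\,\mathrm{dist}(A,B)\quad\text{for all }x\in A,\ y\in B.$$ Then $T$ has a unique best proximity point $x$ in $A$, and for every $x_0\in A$ the sequence $\{T^{2n}x_0\}_{n=1}^\infty$ converges to $x$. Moreover $T$ has at least one best proximity point in $B$, and if the ordered pair $(B,A)$ also has the $BUC$ property, this best proximity point in $B$ is unique.
   Context: $\mathrm{dist}(A,B)=\inf\{\rho(a,b):a\in A,\ b\in B\}$. A map $T:A\cup B\to A\cup B$ is cyclic if $T(A)\subseteq B$ and $T(B)\subseteq A$. A point $x\in A$ (resp. $x\in B$) is a best proximity point of $T$ in $A$ (resp. in $B$) if $\rho(x,Tx)=\mathrm{dist}(A,B)$. The ordered pair $(A,B)$ has the bounded $UC$ property ($BUC$) if for all bounded sequences $\{x_n\},\{z_n\}\subset A$ and every sequence $\{y_n\}\subset B$ with $\lim_n\rho(x_n,y_n)=\lim_n\rho(z_n,y_n)=\mathrm{dist}(A,B)$ one has $\lim_n\rho(x_n,z_n)=0$; the property for $(B,A)$ is defined with the roles of $A$ and $B$ interchanged. *)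

theory Defs
  imports "HOL-Analysis.Analysis"
begin

text \<open>dist(A,B) is the library's setdist (for nonempty A, B it is the infimum of distances).\<close>

definition cyclic_map :: "('a \<Rightarrow> 'a) \<Rightarrow> 'a set \<Rightarrow> 'a set \<Rightarrow> bool" where
  "cyclic_map T A B \<longleftrightarrow> T ` A \<subseteq> B \<and> T ` B \<subseteq> A"

definition best_proximity_point :: "('a::metric_space \<Rightarrow> 'a) \<Rightarrow> 'a set \<Rightarrow> 'a set \<Rightarrow> 'a \<Rightarrow> bool" where
  "best_proximity_point T A B x \<longleftrightarrow> x \<in> A \<and> dist x (T x) = setdist A B"

definition BUC :: "'a::metric_space set \<Rightarrow> 'a set \<Rightarrow> bool" where
  "BUC A B \<longleftrightarrow> (\<forall>(x::nat \<Rightarrow> 'a) z y.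
      (\<forall>n. x n \<in> A \<and> z n \<in> A \<and> y n \<in> B) \<and> bounded (range x) \<and> bounded (range z) \<and>
      (\<lambda>n. dist (x n) (y n)) \<longlonglongrightarrow> setdist A B \<and>
      (\<lambda>n. dist (z n) (y n)) \<longlonglongrightarrow> setdist A B
      \<longrightarrow> (\<lambda>n. dist (x n) (z n)) \<longlonglongrightarrow> 0)"

end

theory Submission
  imports Defs
begin

text \<open>Along the orbit of any \<open>x0 \<in> A\<close>, the excess of the gap \<open>dist (T^n x0) (T^(n+1) x0)\<close>
  over \<open>setdist A B\<close> shrinks by the factor \<open>k\<close> at each step, and so does the excess of
  the distance between an even and an odd iterate once both indices are large. Hence the even
  iterates all approach the same odd iterates almost optimally, and BUC forces them to be Cauchy;
  passing to the limit in the contraction inequality shows that the limit is a best proximity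
  point. For two best proximity points \<open>x, x'\<close> the excesses of \<open>dist x (T x')\<close> and
  \<open>dist x' (T x)\<close> contract into each other, so they vanish and BUC identifies \<open>x\<close> and \<open>x'\<close>.
  The contraction condition is symmetric in \<open>A\<close> and \<open>B\<close>, which gives the claims about \<open>B\<close>.\<close>

lemma excess_le_mult_excess:
  fixes k d D D' :: real
  assumes "0 \<le> k" "k < 1" "d \<le> D" "d \<le> D'" "D' \<le> k * max D D' + (1 - k) * d"
  shows "D' - d \<le> k * (D - d)"
proof (cases "D \<le> D'")
  case True
  with assms have "(1 - k) * D' \<le> (1 - k) * d" by (simp add: max_def algebra_simps)
  with assms have "D' \<le> d" by simp
  with assms show ?thesis by simp
next
  case False
  with assms show ?thesis by (simp add: max_def algebra_simps)
qed

lemma le_divide_of_le_add_mult_max: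
  fixes k c M :: real
  assumes "0 \<le> k" "k < 1" "0 \<le> c" "M \<le> c + k * max M c"
  shows "M \<le> c / (1 - k)"
proof (cases "c \<le> M")
  case True
  with assms have "(1 - k) * M \<le> c" by (simp add: max_def algebra_simps)
  with assms show ?thesis by (simp add: pos_le_divide_eq mult.commute)
next
  case False
  have "c \<le> c / (1 - k)"
    using assms by (simp add: le_divide_eq mult_left_le)
  with False show ?thesis by simp
qed

lemma BUC_eq_of_proximal:
  assumes "BUC A B" "a \<in> A" "c \<in> A" "b \<in> B"
    and "dist a b = setdist A B" "dist c b = setdist A B"
  shows "a = c"
proof -
  have "(\<lambda>n. dist a c) \<longlonglongrightarrow> 0"
    using assms(1)[unfolded BUC_def, rule_format, of "\<lambda>n. a" "\<lambda>n. c" "\<lambda>n. b"] assms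
    by simp
  then show ?thesis by (simp add: LIMSEQ_const_iff)
qed

text \<open>Two subsequences of \<open>y\<close> staying \<open>r\<close> apart would both approach \<open>z\<close> optimally,
  contradicting BUC.\<close>
lemma BUC_Cauchy:
  assumes BUC: "BUC A B" and y: "range y \<subseteq> A" and z: "range z \<subseteq> B"
    and eps: "eps \<longlonglongrightarrow> 0"
    and close: "\<And>m n. m \<le> n \<Longrightarrow> dist (y n) (z m) \<le> setdist A B + eps m"
  shows "Cauchy y"
proof (rule ccontr)
  assume "\<not> Cauchy y"
  then obtain r where r: "r > 0" and "\<forall>M. \<exists>m\<ge>M. \<exists>n\<ge>M. r \<le> dist (y m) (y n)"
    unfolding Cauchy_def by (auto simp: not_less)
  then obtain p q where pq: "\<And>M. p M \<ge> M \<and> q M \<ge> M \<and> r \<le> dist (y (p M)) (y (q M))"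
    by metis
  have bounded: "bounded (range y)"
    unfolding bounded_def using close[of 0] by (metis dist_commute rangeE zero_le)
  have approach: "(\<lambda>M. dist (y (f M)) (z M)) \<longlonglongrightarrow> setdist A B" if f: "\<And>M. f M \<ge> M" for f
  proof (rule real_tendsto_sandwich[where f="\<lambda>M. setdist A B" and h="\<lambda>M. setdist A B + eps M"])
    show "\<forall>\<^sub>F M in sequentially. setdist A B \<le> dist (y (f M)) (z M)"
      using y z by (auto intro!: always_eventually setdist_le_dist)
    show "\<forall>\<^sub>F M in sequentially. dist (y (f M)) (z M) \<le> setdist A B + eps M"
      using close f by simp
    show "(\<lambda>M. setdist A B + eps M) \<longlonglongrightarrow> setdist A B"
      using tendsto_add[OF tendsto_const eps] by simp
  qed simp
  have "(\<lambda>M. dist (y (p M)) (y (q M))) \<longlonglongrightarrow> 0"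
    using BUC[unfolded BUC_def, rule_format, of "y \<circ> p" "y \<circ> q" z]
      y z approach[of p] approach[of q] pq bounded_subset[OF bounded]
    by (auto simp: image_subset_iff)
  then have "\<forall>\<^sub>F M in sequentially. dist (y (p M)) (y (q M)) < r"
    using r by (rule order_tendstoD(2))
  then show False
    using pq by (auto simp: eventually_sequentially not_le[symmetric])
qed

locale cyclic_max_contraction =
  fixes A B :: "'a::complete_space set" and T :: "'a \<Rightarrow> 'a" and k :: real
  assumes closed: "closed A" "closed B"
    and BUC: "BUC A B"
    and cyclic: "cyclic_map T A B"
    and k: "0 < k" "k < 1"
    and contraction: "\<And>x y. x \<in> A \<Longrightarrow> y \<in> B \<Longrightarrow>
           dist (T x) (T y) \<le> k * max (dist x y) (max (dist x (T x)) (dist y (T y)))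
                                + (1 - k) * setdist A B"
begin

lemma T_in_B: "x \<in> A \<Longrightarrow> T x \<in> B" and T_in_A: "x \<in> B \<Longrightarrow> T x \<in> A"
  using cyclic by (auto simp: cyclic_map_def)

lemma setdist_le_dist_across:
  "x \<in> A \<and> y \<in> B \<or> x \<in> B \<and> y \<in> A \<Longrightarrow> setdist A B \<le> dist x y"
  by (metis setdist_le_dist setdist_sym)

lemma contraction_across:
  assumes "x \<in> A \<and> y \<in> B \<or> x \<in> B \<and> y \<in> A"
  shows "dist (T x) (T y) \<le> k * max (dist x y) (max (dist x (T x)) (dist y (T y)))
                                + (1 - k) * setdist A B"
  using assms contraction[of x y] contraction[of y x]
  by (auto simp: dist_commute max.commute max.left_commute)

lemma best_proximity_point_image:
  assumes x: "best_proximity_point T A B x"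
  shows "best_proximity_point T B A (T x)"
proof -
  let ?d = "setdist A B" and ?s = "dist (T x) (T (T x))"
  have xA: "x \<in> A" and dx: "dist x (T x) = ?d"
    using x by (auto simp: best_proximity_point_def)
  have "?d \<le> ?s"
    using setdist_le_dist_across T_in_A T_in_B xA by simp
  moreover have "?s \<le> k * max ?d ?s + (1 - k) * ?d"
    using contraction[OF xA T_in_B[OF xA]] dx by simp
  ultimately have "?s - ?d \<le> k * (?d - ?d)"
    using excess_le_mult_excess[of k ?d ?d ?s] k by simp
  with \<open>?d \<le> ?s\<close> show ?thesis
    using T_in_B[OF xA] by (simp add: best_proximity_point_def setdist_sym)
qed

lemma best_proximity_point_T_T:
  assumes x: "best_proximity_point T A B x"
  shows "T (T x) = x"
  using BUC_eq_of_proximal[OF BUC, of "T (T x)" x "T x"] T_in_A T_in_B x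
    best_proximity_point_image[OF x]
  by (auto simp: best_proximity_point_def setdist_sym dist_commute)

lemma best_proximity_point_unique:
  assumes x: "best_proximity_point T A B x" and x': "best_proximity_point T A B x'"
  shows "x = x'"
proof -
  let ?d = "setdist A B" and ?a = "dist x (T x')" and ?b = "dist x' (T x)"
  have in_A: "x \<in> A" "x' \<in> A" and gaps: "dist x (T x) = ?d" "dist x' (T x') = ?d"
    using x x' by (auto simp: best_proximity_point_def)
  have image_gaps: "dist (T x) (T (T x)) = ?d" "dist (T x') (T (T x')) = ?d"
    using best_proximity_point_image[OF x] best_proximity_point_image[OF x']
    by (auto simp: best_proximity_point_def setdist_sym)
  have a_le: "?d \<le> ?a" and b_le: "?d \<le> ?b"
    using setdist_le_dist_across T_in_B in_A by auto
  have "?a \<le> k * max ?b ?d + (1 - k) * ?d"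
    using contraction[OF in_A(2) T_in_B[OF in_A(1)]] gaps image_gaps
      best_proximity_point_T_T[OF x] by (simp add: dist_commute)
  then have a: "?a - ?d \<le> k * (?b - ?d)"
    using excess_le_mult_excess[of k ?d ?b ?a] k a_le b_le
    by (smt (verit) max.coboundedI2 mult_left_mono)
  have "?b \<le> k * max ?a ?d + (1 - k) * ?d"
    using contraction[OF in_A(1) T_in_B[OF in_A(2)]] gaps image_gaps
      best_proximity_point_T_T[OF x'] by (simp add: dist_commute)
  then have b: "?b - ?d \<le> k * (?a - ?d)"
    using excess_le_mult_excess[of k ?d ?a ?b] k a_le b_le
    by (smt (verit) max.coboundedI2 mult_left_mono)
  have "?a - ?d \<le> k * (k * (?a - ?d))"
    using a mult_left_mono[OF b] k by (meson less_imp_le order_trans)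
  then have "(1 - k * k) * (?a - ?d) \<le> 0"
    by (simp add: algebra_simps)
  moreover have "0 < 1 - k * k"
    using k mult_strict_mono[of k 1 k 1] by simp
  ultimately have "?a = ?d"
    using a_le by (simp add: mult_le_0_iff)
  then show ?thesis
    using BUC_eq_of_proximal[OF BUC in_A T_in_B[OF in_A(2)]] gaps by simp
qed

end

lemma cyclic_max_contraction_swap:
  assumes "cyclic_max_contraction A B T k" "BUC B A"
  shows "cyclic_max_contraction B A T k"
proof -
  interpret cyclic_max_contraction A B T k by fact
  show ?thesis
    using closed assms(2) cyclic k contraction_across
    by unfold_locales (auto simp: cyclic_map_def setdist_sym)
qed

locale cyclic_max_contraction_orbit = cyclic_max_contraction +
  fixes x0 assumes x0: "x0 \<in> A"
begin

abbreviation orbit :: "nat \<Rightarrow> 'a" where "orbit n \<equiv> (T ^^ n) x0"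

abbreviation gap :: "nat \<Rightarrow> real" where "gap n \<equiv> dist (orbit n) (orbit (Suc n))"

lemma orbit_in: "orbit n \<in> (if even n then A else B)"
  by (induction n) (auto simp: x0 T_in_A T_in_B)

lemma even_orbit_in: "orbit (2 * n) \<in> A" and odd_orbit_in: "orbit (2 * n + 1) \<in> B"
  using orbit_in[of "2 * n"] orbit_in[of "2 * n + 1"] by simp_all

lemma orbit_across: "orbit n \<in> A \<and> orbit m \<in> B \<or> orbit n \<in> B \<and> orbit m \<in> A"
  if "odd (n + m)"
  using that orbit_in[of n] orbit_in[of m] by (auto split: if_splits)

lemma setdist_le_gap: "setdist A B \<le> gap n"
  by (rule setdist_le_dist_across) (rule orbit_across, simp)

lemma gap_excess_le: "gap n - setdist A B \<le> k ^ n * (gap 0 - setdist A B)"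
proof (induction n)
  case (Suc n)
  have "gap (Suc n) - setdist A B \<le> k * (gap n - setdist A B)"
    using k setdist_le_gap[of n] setdist_le_gap[of "Suc n"] contraction_across[OF orbit_across[of n "Suc n"]]
    by (intro excess_le_mult_excess) simp_all
  also have "\<dots> \<le> k * (k ^ n * (gap 0 - setdist A B))"
    using Suc k by (simp add: mult_left_mono)
  finally show ?case by simp
qed simp

lemma gap_le: "gap n \<le> dist x0 (T x0)"
proof -
  have "k ^ n * (gap 0 - setdist A B) \<le> gap 0 - setdist A B"
    using k setdist_le_gap[of 0] by (simp add: mult_left_le_one_le power_le_one)
  then show ?thesis
    using gap_excess_le[of n] by simp
qed

lemma gap_tendsto: "gap \<longlonglongrightarrow> setdist A B"
proof (rule real_tendsto_sandwich)
  show "\<forall>\<^sub>F n in sequentially. setdist A B \<le> gap n"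
    using setdist_le_gap by simp
  show "\<forall>\<^sub>F n in sequentially. gap n \<le> setdist A B + k ^ n * (gap 0 - setdist A B)"
    using gap_excess_le by (simp add: algebra_simps)
  have "(\<lambda>n. setdist A B + k ^ n * (gap 0 - setdist A B))
      \<longlonglongrightarrow> setdist A B + 0 * (gap 0 - setdist A B)"
    using k by (intro tendsto_intros) auto
  then show "(\<lambda>n. setdist A B + k ^ n * (gap 0 - setdist A B)) \<longlonglongrightarrow> setdist A B"
    by simp
qed simp

lemma gap_excess_le_pow: "j \<le> n \<Longrightarrow> gap n - setdist A B \<le> k ^ j * dist x0 (T x0)"
proof -
  assume "j \<le> n"
  then have "k ^ n \<le> k ^ j"
    using k by (simp add: power_decreasing)
  moreover have "0 \<le> gap 0 - setdist A B" "gap 0 - setdist A B \<le> gap 0"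
    using setdist_le_gap[of 0] by (simp_all add: setdist_pos_le)
  ultimately have "k ^ n * (gap 0 - setdist A B) \<le> k ^ j * gap 0"
    using k by (meson mult_mono zero_le_power less_imp_le order_trans)
  then show ?thesis
    using gap_excess_le[of n] by simp
qed

lemma even_odd_dist_bounded:
  "dist (orbit (2 * a)) (orbit (2 * b + 1)) \<le> 3 * dist x0 (T x0) / (1 - k)"
proof -
  let ?M = "dist (orbit (2 * a)) (orbit (2 * b + 1))" and ?g = "dist x0 (T x0)"
  have gaps: "gap (2 * a) \<le> ?g" "gap (2 * b + 1) \<le> ?g" "setdist A B \<le> ?g"
    using gap_le[of "2 * a"] gap_le[of "2 * b + 1"] setdist_le_gap[of 0] by auto
  have "dist (orbit (2 * a + 1)) (orbit (2 * b + 2))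
      \<le> k * max ?M (max (gap (2 * a)) (gap (2 * b + 1))) + (1 - k) * setdist A B"
    using contraction_across[OF orbit_across[of "2 * a" "2 * b + 1"]] by simp
  also have "\<dots> \<le> k * max ?M ?g + (1 - k) * ?g"
    using gaps k by (intro add_mono mult_left_mono) auto
  finally have middle: "dist (orbit (2 * a + 1)) (orbit (2 * b + 2)) \<le> k * max ?M ?g + (1 - k) * ?g" .
  have "?M \<le> gap (2 * a) + dist (orbit (2 * a + 1)) (orbit (2 * b + 2)) + gap (2 * b + 1)"
    using dist_triangle[of "orbit (2 * a)" "orbit (2 * b + 1)" "orbit (2 * a + 1)"]
      dist_triangle[of "orbit (2 * a + 1)" "orbit (2 * b + 1)" "orbit (2 * b + 2)"]
    by (simp add: dist_commute)
  also have "\<dots> \<le> 3 * ?g + k * max ?M (3 * ?g)"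
  proof -
    have "k * max ?M ?g \<le> k * max ?M (3 * ?g)"
      using k by (intro mult_left_mono max.mono) auto
    then show ?thesis
      using middle gaps k by (smt (verit) mult_left_le_one_le zero_le_dist)
  qed
  finally show ?thesis
    using k by (intro le_divide_of_le_add_mult_max) auto
qed

text \<open>Applying \<open>T\<close> to the pair \<open>(orbit (2*b), orbit (2*m+1))\<close> contracts the excess by \<open>k\<close>,
  because the gaps occurring in the maximum are already that small.\<close>
lemma even_odd_excess_decay:
  assumes "j \<le> a" "j \<le> b"
  shows "dist (orbit (2 * a)) (orbit (2 * b + 1)) - setdist A B
    \<le> k ^ j * (3 * dist x0 (T x0) / (1 - k))"
  using assms
proof (induction j arbitrary: a b)
  case 0
  then show ?case
    using even_odd_dist_bounded[of a b] setdist_pos_le[of A B] by (simp add: diff_le_eq add_increasing2)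
next
  case (Suc j)
  let ?d = "setdist A B" and ?C = "3 * dist x0 (T x0) / (1 - k)"
  obtain m where a: "a = Suc m" and m: "j \<le> m"
    using Suc.prems by (cases a) auto
  have "dist x0 (T x0) * (1 - k) \<le> dist x0 (T x0)"
    using k by (intro mult_left_le) auto
  then have "dist x0 (T x0) * (1 - k) \<le> 3 * dist x0 (T x0)"
    using zero_le_dist[of x0 "T x0"] by linarith
  then have "dist x0 (T x0) \<le> ?C"
    using k by (simp add: le_divide_eq)
  then have "k ^ j * dist x0 (T x0) \<le> k ^ j * ?C"
    using k by (intro mult_left_mono) auto
  then have bounds: "dist (orbit (2 * b)) (orbit (2 * m + 1)) \<le> ?d + k ^ j * ?C"
    "gap (2 * b) \<le> ?d + k ^ j * ?C" "gap (2 * m + 1) \<le> ?d + k ^ j * ?C"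
    using Suc.IH[of b m] Suc.prems m gap_excess_le_pow[of j "2 * b"] gap_excess_le_pow[of j "2 * m + 1"]
    by auto
  have "dist (orbit (2 * a)) (orbit (2 * b + 1))
      \<le> k * max (dist (orbit (2 * m + 1)) (orbit (2 * b))) (max (gap (2 * m + 1)) (gap (2 * b)))
         + (1 - k) * ?d"
    using contraction_across[OF orbit_across[of "2 * m + 1" "2 * b"]] a by simp
  also have "\<dots> \<le> k * (?d + k ^ j * ?C) + (1 - k) * ?d"
    using bounds k by (intro add_mono mult_left_mono) (auto simp: dist_commute)
  finally show ?case
    by (simp add: algebra_simps)
qed

lemma even_orbit_Cauchy: "Cauchy (\<lambda>n. orbit (2 * n))"
proof (rule BUC_Cauchy[OF BUC])
  show "range (\<lambda>n. orbit (2 * n)) \<subseteq> A" "range (\<lambda>n. orbit (2 * n + 1)) \<subseteq> B"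
    using even_orbit_in odd_orbit_in by auto
  show "(\<lambda>m. k ^ m * (3 * dist x0 (T x0) / (1 - k))) \<longlonglongrightarrow> 0"
    using k by (intro tendsto_mult_left_zero LIMSEQ_realpow_zero) auto
  show "dist (orbit (2 * n)) (orbit (2 * m + 1))
      \<le> setdist A B + k ^ m * (3 * dist x0 (T x0) / (1 - k))" if "m \<le> n" for m n
    using even_odd_excess_decay[of m n m] that by simp
qed

lemma even_orbit_limit:
  "\<exists>l. (\<lambda>n. orbit (2 * n)) \<longlonglongrightarrow> l \<and> best_proximity_point T A B l"
proof -
  let ?d = "setdist A B"
  obtain l where lim: "(\<lambda>n. orbit (2 * n)) \<longlonglongrightarrow> l"
    using even_orbit_Cauchy Cauchy_convergent_iff convergent_def by blast
  have lA: "l \<in> A"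
    using closed_sequentially[OF closed(1) _ lim] even_orbit_in by auto
  define s where "s = dist l (T l)"
  have gaps: "(\<lambda>n. gap (2 * n)) \<longlonglongrightarrow> ?d" "(\<lambda>n. gap (2 * n + 1)) \<longlonglongrightarrow> ?d"
    using LIMSEQ_subseq_LIMSEQ[OF gap_tendsto, of "\<lambda>n. 2 * n"]
      LIMSEQ_subseq_LIMSEQ[OF gap_tendsto, of "\<lambda>n. 2 * n + 1"]
    by (simp_all add: strict_mono_def o_def)
  have step: "dist (T l) (orbit (2 * Suc n))
      \<le> k * max (dist l (orbit (2 * n)) + gap (2 * n)) (max s (gap (2 * n + 1))) + (1 - k) * ?d"
    for n
  proof -
    have "dist (T l) (orbit (2 * Suc n))
        \<le> k * max (dist l (orbit (2 * n + 1))) (max s (gap (2 * n + 1))) + (1 - k) * ?d"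
      using contraction[OF lA odd_orbit_in[of n]] by (simp add: s_def)
    also have "\<dots> \<le> k * max (dist l (orbit (2 * n)) + gap (2 * n)) (max s (gap (2 * n + 1))) + (1 - k) * ?d"
      using k dist_triangle[of l "orbit (2 * n + 1)" "orbit (2 * n)"]
      by (intro add_mono mult_left_mono max.mono) auto
    finally show ?thesis .
  qed
  have "(\<lambda>n. dist (T l) (orbit (2 * Suc n))) \<longlonglongrightarrow> dist (T l) l"
    using LIMSEQ_Suc[OF lim] by (intro tendsto_intros)
  moreover have "(\<lambda>n. k * max (dist l (orbit (2 * n)) + gap (2 * n)) (max s (gap (2 * n + 1)))
      + (1 - k) * ?d) \<longlonglongrightarrow> k * max (dist l l + ?d) (max s ?d) + (1 - k) * ?d"
    by (intro tendsto_intros lim gaps)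
  ultimately have "s \<le> k * max (dist l l + ?d) (max s ?d) + (1 - k) * ?d"
    using step by (auto simp: s_def dist_commute intro: LIMSEQ_le)
  moreover have "?d \<le> s"
    using setdist_le_dist_across lA T_in_B by (simp add: s_def)
  ultimately have "s - ?d \<le> k * (?d - ?d)"
    using excess_le_mult_excess[of k ?d ?d s] k by (simp add: max_def)
  with \<open>?d \<le> s\<close> lA lim show ?thesis
    by (auto simp: best_proximity_point_def s_def)
qed

end

lemma (in cyclic_max_contraction) even_iterates_converge_to_best_proximity_point:
  assumes "x0 \<in> A"
  shows "\<exists>l. (\<lambda>n. (T ^^ (2 * n)) x0) \<longlonglongrightarrow> l \<and> best_proximity_point T A B l"
proof -
  interpret cyclic_max_contraction_orbit A B T k x0
    using assms by unfold_locales
  show ?thesis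
    by (rule even_orbit_limit)
qed

theorem theorem33:
  fixes A B :: "'a::complete_space set" and T :: "'a \<Rightarrow> 'a" and k :: real
  assumes "A \<noteq> {}" "B \<noteq> {}" "closed A" "closed B"
    and "BUC A B"
    and "cyclic_map T A B"
    and "0 < k" "k < 1"
    and "\<And>x y. x \<in> A \<Longrightarrow> y \<in> B \<Longrightarrow>
           dist (T x) (T y) \<le> k * max (dist x y) (max (dist x (T x)) (dist y (T y)))
                                + (1 - k) * setdist A B"
  shows "(\<exists>x. best_proximity_point T A B x
              \<and> (\<forall>x'. best_proximity_point T A B x' \<longrightarrow> x' = x)
              \<and> (\<forall>x0\<in>A. (\<lambda>n. (T ^^ (2 * n)) x0) \<longlonglongrightarrow> x))
         \<and> (\<exists>y. best_proximity_point T B A y)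
         \<and> (BUC B A \<longrightarrow> (\<exists>!y. best_proximity_point T B A y))"
proof -
  interpret cyclic_max_contraction A B T k
    using assms(3-) by unfold_locales
  obtain a where "a \<in> A"
    using assms(1) by auto
  then obtain l where l: "best_proximity_point T A B l"
    using even_iterates_converge_to_best_proximity_point by blast
  have "\<forall>x0\<in>A. (\<lambda>n. (T ^^ (2 * n)) x0) \<longlonglongrightarrow> l"
    using even_iterates_converge_to_best_proximity_point best_proximity_point_unique[OF l] by blast
  moreover have "BUC B A \<longrightarrow> (\<exists>!y. best_proximity_point T B A y)"
    using best_proximity_point_image[OF l] cyclic_max_contraction.best_proximity_point_unique
      cyclic_max_contraction_swap[OF cyclic_max_contraction_axioms] by blast
  ultimately show ?thesis
    using l best_proximity_point_unique best_proximity_point_image[OF l] by blast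
qed

end
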